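(* Let $\mathcal{A}$ be a finite alphabet and $\mathbf{p},\mathbf{q}$ standard pairs on $\mathcal{A}$ such that $\mathbf{p}$ is of Type $\langle2\rangle$ and $\mathbf{q}$ is of Type $\langle4\rangle$ or of Type $\langle5\rangle$. Then the non-labeled extended Rauzy classes of $\mathbf{p}$ and $\mathbf{q}$ are different.
   Context: Let $n=\#\mathcal{A}\ge2$. A pair is $\mathbf{p}=(p_0,p_1)$ with $p_0,p_1:\mathcal{A}\to\{1,\dots,n\}$ bijections. Irreducible: $p_0^{-1}\{1,\dots,k\}\ne p_1^{-1}\{1,\dots,k\}$ for $1\le k<n$. Rauzy move of type $\varepsilon$: $\varepsilon\mathbf{p}=(p'_0,p'_1)$, $p'_\varepsilon=p_\varepsilon$, and for $z=p_\varepsilon^{-1}(n)$, $p'_{1-\varepsilon}(b)=p_{1-\varepsilon}(b)$ if $p_{1-\varepsilon}(b)\le p_{1-\varepsilon}(z)$, $=p_{1-\varepsilon}(b)+1$ if $p_{1-\varepsilon}(z)<p_{1-\varepsilon}(b)<n$, $=p_{1-\varepsilon}(z)+1$ if $p_{1-\varepsilon}(b)=n$. Left Rauzy move of type $\varepsilon$: $\tilde\varepsilon\mathbf{p}=(p'_0,p'_1)$, $p'_\varepsilon=p_\varepsilon$, and for $a=p_\varepsilon^{-1}(1)$, $p'_{1-\varepsilon}(b)=p_{1-\varepsilon}(a)-1$ if $p_{1-\varepsilon}(b)=1$, $=p_{1-\varepsilon}(b)-1$ if $1<p_{1-\varepsilon}(b)<p_{1-\varepsilon}(a)$, unchanged otherwise.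 The labeled extended Rauzy class of $\mathbf{p}$ is the set of pairs reachable from $\mathbf{p}$ by Rauzy and left Rauzy moves of both types; the non-labeled extended Rauzy class is its image under $(p_0,p_1)\mapsto p_1\circ p_0^{-1}\in\mathfrak{S}_n$. Standard: $p_0^{-1}(1)=p_1^{-1}(n)$ and $p_1^{-1}(1)=p_0^{-1}(n)$. A standard pair is piece-wise order reversing if there are $2=k_0<\dots<k_\ell=n$ with $B_i=p_0^{-1}\{k_{i-1},\dots,k_i-1\}=p_1^{-1}\{k_{i-1},\dots,k_i-1\}$ and $p_0(b)+p_1(b)=k_{i-1}+k_i-1$ for $b\in B_i$; the $B_i$ are blocks ($k$-block: $k$ letters). Chains: with the $1$-blocks $S_1,\dots,S_{k-1}$ listed left to right, chain $C_i$ is the possibly empty sequence of consecutive blocks strictly between $S_{i-1}$ and $S_i$ ($C_1$ before $S_1$, $C_k$ after $S_{k-1}$). Types (defined only for piece-wise order reversing pairs, and requiring more than one block of size $\ge2$): Type $\langle2\rangle$: all nonempty chains consist of $2$-blocks; Type $\langle4\rangle$: exactly one chain consists of a $4$-block followed by $m\ge0$ consecutive $2$-blocks and all other nonempty chains consist of $2$-blocks; Type $\langle5\rangle$: exactly one chain consists of a single $5$-block and every other nonempty chain consists of exactly one $2$-block. *)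

theory Defs
  imports Main "HOL-Library.Cardinality"
begin

text \<open>The alphabet is a finite type 'a; n = CARD('a).
  A pair is (p0, p1) with p0, p1 :: 'a => nat bijections onto {1..n}.\<close>

type_synonym 'a pair = "('a \<Rightarrow> nat) \<times> ('a \<Rightarrow> nat)"

definition is_pair :: "('a::finite) pair \<Rightarrow> bool" where
  "is_pair p \<longleftrightarrow> bij_betw (fst p) UNIV {1..CARD('a)} \<and> bij_betw (snd p) UNIV {1..CARD('a)}"

definition irreducible :: "('a::finite) pair \<Rightarrow> bool" where
  "irreducible p \<longleftrightarrow> (\<forall>k. 1 \<le> k \<and> k < CARD('a) \<longrightarrow>
      fst p -` {1..k} \<noteq> snd p -` {1..k})"

text \<open>Right Rauzy move: pe is the row of type eps (kept), po the other row.\<close>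
definition rauzy_row :: "('a::finite \<Rightarrow> nat) \<Rightarrow> ('a \<Rightarrow> nat) \<Rightarrow> ('a \<Rightarrow> nat)" where
  "rauzy_row pe po = (\<lambda>b. let z = inv pe CARD('a) in
      if po b \<le> po z then po b
      else if po b < CARD('a) then po b + 1
      else po z + 1)"

definition left_rauzy_row :: "('a::finite \<Rightarrow> nat) \<Rightarrow> ('a \<Rightarrow> nat) \<Rightarrow> ('a \<Rightarrow> nat)" where
  "left_rauzy_row pe po = (\<lambda>b. let a = inv pe 1 in
      if po b = 1 then po a - 1
      else if 1 < po b \<and> po b < po a then po b - 1
      else po b)"

text \<open>Type eps = 0 is encoded by False, type eps = 1 by True.\<close>
definition rauzy :: "bool \<Rightarrow> ('a::finite) pair \<Rightarrow> 'a pair" where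
  "rauzy e p = (if e then (rauzy_row (snd p) (fst p), snd p)
                else (fst p, rauzy_row (fst p) (snd p)))"

definition left_rauzy :: "bool \<Rightarrow> ('a::finite) pair \<Rightarrow> 'a pair" where
  "left_rauzy e p = (if e then (left_rauzy_row (snd p) (fst p), snd p)
                     else (fst p, left_rauzy_row (fst p) (snd p)))"

definition rauzy_step :: "('a::finite) pair \<Rightarrow> 'a pair \<Rightarrow> bool" where
  "rauzy_step p q \<longleftrightarrow> (\<exists>e. q = rauzy e p \<or> q = left_rauzy e p)"

definition labeled_ext_rauzy_class :: "('a::finite) pair \<Rightarrow> 'a pair set" where
  "labeled_ext_rauzy_class p = {q. rauzy_step\<^sup>*\<^sup>* p q}"

definition pair_perm :: "('a::finite) pair \<Rightarrow> nat \<Rightarrow> nat" where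
  "pair_perm p = (\<lambda>k. if 1 \<le> k \<and> k \<le> CARD('a) then snd p (inv (fst p) k) else k)"

definition nonlabeled_ext_rauzy_class :: "('a::finite) pair \<Rightarrow> (nat \<Rightarrow> nat) set" where
  "nonlabeled_ext_rauzy_class p = pair_perm ` labeled_ext_rauzy_class p"

definition standard :: "('a::finite) pair \<Rightarrow> bool" where
  "standard p \<longleftrightarrow> inv (fst p) 1 = inv (snd p) CARD('a) \<and> inv (snd p) 1 = inv (fst p) CARD('a)"

definition por_with :: "('a::finite) pair \<Rightarrow> nat \<Rightarrow> (nat \<Rightarrow> nat) \<Rightarrow> bool" where
  "por_with p l k \<longleftrightarrow> standard p \<and> k 0 = 2 \<and> k l = CARD('a) \<and>
     (\<forall>i<l. k i < k (Suc i)) \<and>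
     (\<forall>i\<in>{1..l}. fst p -` {k (i-1)..<k i} = snd p -` {k (i-1)..<k i} \<and>
        (\<forall>b\<in>fst p -` {k (i-1)..<k i}. fst p b + snd p b = k (i-1) + k i - 1))"

definition piecewise_order_reversing :: "('a::finite) pair \<Rightarrow> bool" where
  "piecewise_order_reversing p \<longleftrightarrow> (\<exists>l k. por_with p l k)"

definition block_sizes :: "nat \<Rightarrow> (nat \<Rightarrow> nat) \<Rightarrow> nat list" where
  "block_sizes l k = map (\<lambda>i. k (Suc i) - k i) [0..<l]"

text \<open>Chains: the maximal (possibly empty) runs of blocks between consecutive 1-blocks,
  including the run before the first and after the last 1-block.\<close>
fun chains :: "nat list \<Rightarrow> nat list list" where
  "chains [] = [[]]"
| "chains (x # xs) = (if x = 1 then [] # chains xs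
                       else (x # hd (chains xs)) # tl (chains xs))"

definition many_big_blocks :: "nat list \<Rightarrow> bool" where
  "many_big_blocks ss \<longleftrightarrow> length (filter (\<lambda>s. 2 \<le> s) ss) > 1"

definition type2_sizes :: "nat list \<Rightarrow> bool" where
  "type2_sizes ss \<longleftrightarrow> many_big_blocks ss \<and>
     (\<forall>c\<in>set (chains ss). c \<noteq> [] \<longrightarrow> (\<forall>x\<in>set c. x = 2))"

definition type4_sizes :: "nat list \<Rightarrow> bool" where
  "type4_sizes ss \<longleftrightarrow> many_big_blocks ss \<and>
     (let cs = chains ss in \<exists>j<length cs.
        (\<exists>m. cs ! j = 4 # replicate m 2) \<and>
        (\<forall>i<length cs. i \<noteq> j \<longrightarrow> cs ! i \<noteq> [] \<longrightarrow> (\<forall>x\<in>set (cs ! i). x = 2)))"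

definition type5_sizes :: "nat list \<Rightarrow> bool" where
  "type5_sizes ss \<longleftrightarrow> many_big_blocks ss \<and>
     (let cs = chains ss in \<exists>j<length cs.
        cs ! j = [5] \<and>
        (\<forall>i<length cs. i \<noteq> j \<longrightarrow> cs ! i \<noteq> [] \<longrightarrow> cs ! i = [2]))"

definition type2 :: "('a::finite) pair \<Rightarrow> bool" where
  "type2 p \<longleftrightarrow> (\<exists>l k. por_with p l k \<and> type2_sizes (block_sizes l k))"

definition type4 :: "('a::finite) pair \<Rightarrow> bool" where
  "type4 p \<longleftrightarrow> (\<exists>l k. por_with p l k \<and> type4_sizes (block_sizes l k))"

definition type5 :: "('a::finite) pair \<Rightarrow> bool" where
  "type5 p \<longleftrightarrow> (\<exists>l k. por_with p l k \<and> type5_sizes (block_sizes l k))"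

end

theory Submission
  imports Defs
begin

text \<open>For a pair p consider the signed sum Z(p) of (-1)^(cr(A) + |A|) over all sets A of letters,
  where cr(A) counts the pairs of letters of A that appear in different orders in the two rows.
  Z depends only on the permutation of p, and it is invariant under Rauzy moves: a move slides one
  letter y past another letter z in one row, and toggling z in the sets containing y matches the
  terms of the two sums with equal signs. For a standard piecewise order reversing pair, the first
  and the last letter cross every other letter, letters of different blocks never cross and the
  letters of one block pairwise cross, so Z = -2 times the product of c(s) over the block sizes s,
  where c(1) = c(2) = 2, c(4) = -4 and c(5) = -8. Hence Z < 0 for Type 2 and Z > 0 for Types 4, 5.\<close>

section \<open>Crossings\<close>

definition crosses :: "('a::finite) pair \<Rightarrow> 'a \<Rightarrow> 'a \<Rightarrow> bool" where
  "crosses p a b \<longleftrightarrow>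
     (fst p a < fst p b \<and> snd p b < snd p a) \<or> (fst p b < fst p a \<and> snd p a < snd p b)"

definition crossings :: "('a::finite) pair \<Rightarrow> 'a set \<Rightarrow> nat" where
  "crossings p A = card {(a, b). a \<in> A \<and> b \<in> A \<and> fst p a < fst p b \<and> snd p b < snd p a}"

lemma crosses_sym: "crosses p a b = crosses p b a"
  unfolding crosses_def by auto

lemma crossings_empty [simp]: "crossings p {} = 0"
  unfolding crossings_def by simp

lemma crossings_insert:
  fixes p :: "('a::finite) pair"
  assumes "x \<notin> A"
  shows "crossings p (insert x A) = crossings p A + card {c \<in> A. crosses p x c}"
proof -
  let ?S = "{(a, b). a \<in> A \<and> b \<in> A \<and> fst p a < fst p b \<and> snd p b < snd p a}"
  let ?R = "{c \<in> A. fst p x < fst p c \<and> snd p c < snd p x}"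
  let ?L = "{c \<in> A. fst p c < fst p x \<and> snd p x < snd p c}"
  have split: "{(a, b). a \<in> insert x A \<and> b \<in> insert x A \<and> fst p a < fst p b \<and> snd p b < snd p a}
      = ?S \<union> (Pair x ` ?R \<union> (\<lambda>c. (c, x)) ` ?L)"
    by auto
  have "card (Pair x ` ?R \<union> (\<lambda>c. (c, x)) ` ?L) = card ?R + card ?L"
    by (subst card_Un_disjoint) (auto simp: card_image inj_on_def)
  also have "\<dots> = card {c \<in> A. crosses p x c}"
    by (subst card_Un_disjoint[symmetric]) (auto intro: arg_cong[where f = card] simp: crosses_def)
  finally show ?thesis
    unfolding crossings_def split using assms by (subst card_Un_disjoint) auto
qed

lemma crossings_Un:
  fixes p :: "('a::finite) pair"
  assumes "A \<inter> C = {}" "\<forall>a\<in>A. \<forall>c\<in>C. \<not> crosses p a c"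
  shows "crossings p (A \<union> C) = crossings p A + crossings p C"
  using finite[of C] assms
proof (induction C rule: finite_induct)
  case (insert x C)
  have "{c \<in> A \<union> C. crosses p x c} = {c \<in> C. crosses p x c}"
    using insert.prems crosses_sym[of p x] by blast
  then show ?case
    using insert crossings_insert[of x "A \<union> C" p] crossings_insert[of x C p] by auto
qed simp

lemma crossings_cong:
  fixes p p' :: "('a::finite) pair"
  assumes "\<forall>a\<in>A. \<forall>b\<in>A. crosses p' a b = crosses p a b"
  shows "crossings p' A = crossings p A"
  using finite[of A] assms
proof (induction A rule: finite_induct)
  case (insert x A)
  then have "{c \<in> A. crosses p' x c} = {c \<in> A. crosses p x c}" by auto
  with insert show ?case by (simp add: crossings_insert)
qed simp

text \<open>The invariant Z of a pair p is crossing_sum p UNIV 1. The twist (-1)^(t * card A) is only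
  there to make the recursion for adjoining a letter that crosses all others close up.\<close>

definition crossing_sum :: "('a::finite) pair \<Rightarrow> 'a set \<Rightarrow> nat \<Rightarrow> int" where
  "crossing_sum p U t = (\<Sum>A\<in>Pow U. (-1) ^ (crossings p A + t * card A))"

lemma crossing_sum_cong:
  assumes "\<And>a b. crosses p' a b = crosses p a b"
  shows "crossing_sum p' U t = crossing_sum p U t"
proof -
  have "crossings p' A = crossings p A" for A by (rule crossings_cong) (simp add: assms)
  then show ?thesis unfolding crossing_sum_def by simp
qed

lemma sum_Pow_insert:
  assumes "finite U" "x \<notin> U"
  shows "(\<Sum>A\<in>Pow (insert x U). f A) = (\<Sum>A\<in>Pow U. f A) + (\<Sum>A\<in>Pow U. f (insert x A))"
proof -
  have "inj_on (insert x) (Pow U)"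
    using assms(2) by (intro inj_onI) (metis Pow_iff insert_ident subset_iff)
  moreover have "Pow U \<inter> insert x ` Pow U = {}" using assms(2) by auto
  ultimately show ?thesis
    unfolding Pow_insert using assms(1) by (subst sum.union_disjoint) (auto simp: sum.reindex)
qed

lemma crossing_sum_insert_crossing:
  fixes p :: "('a::finite) pair"
  assumes "x \<notin> U" "\<forall>c\<in>U. crosses p x c"
  shows "crossing_sum p (insert x U) t = crossing_sum p U t + (-1) ^ t * crossing_sum p U (Suc t)"
proof -
  have "(-1::int) ^ (crossings p (insert x A) + t * card (insert x A))
      = (-1) ^ t * (-1) ^ (crossings p A + Suc t * card A)" if "A \<subseteq> U" for A
  proof -
    have "x \<notin> A" "{c \<in> A. crosses p x c} = A" using that assms by auto
    then have "crossings p (insert x A) + t * card (insert x A)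
        = t + (crossings p A + Suc t * card A)"
      by (simp add: crossings_insert finite_subset)
    then show ?thesis by (simp add: power_add)
  qed
  then show ?thesis
    unfolding crossing_sum_def using assms(1) by (simp add: sum_Pow_insert sum_distrib_left)
qed

lemma crossing_sum_Suc_Suc: "crossing_sum p U (Suc (Suc t)) = crossing_sum p U t"
  unfolding crossing_sum_def by (simp add: power_add power_mult)

lemma crossing_sum_Un:
  fixes p :: "('a::finite) pair"
  assumes "U \<inter> V = {}" "\<forall>a\<in>U. \<forall>c\<in>V. \<not> crosses p a c"
  shows "crossing_sum p (U \<union> V) t = crossing_sum p U t * crossing_sum p V t"
proof -
  have Pow_Un: "Pow (U \<union> V) = (\<lambda>(A, C). A \<union> C) ` (Pow U \<times> Pow V)"
  proof (intro equalityI subsetI)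
    fix B assume "B \<in> Pow (U \<union> V)"
    then have "B = (\<lambda>(A, C). A \<union> C) (B \<inter> U, B \<inter> V)" by auto
    then show "B \<in> (\<lambda>(A, C). A \<union> C) ` (Pow U \<times> Pow V)" by blast
  qed auto
  have inj: "inj_on (\<lambda>(A, C). A \<union> C) (Pow U \<times> Pow V)"
  proof (rule inj_onI, clarsimp)
    fix A C A' C' assume "A \<subseteq> U" "C \<subseteq> V" "A' \<subseteq> U" "C' \<subseteq> V" "A \<union> C = A' \<union> C'"
    then show "A = A' \<and> C = C'" using assms(1) by blast
  qed
  have "crossing_sum p (U \<union> V) t
      = (\<Sum>(A, C)\<in>Pow U \<times> Pow V. (-1::int) ^ (crossings p (A \<union> C) + t * card (A \<union> C)))"
    unfolding crossing_sum_def Pow_Un by (subst sum.reindex[OF inj]) (simp add: case_prod_beta)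
  also have "\<dots> = (\<Sum>(A, C)\<in>Pow U \<times> Pow V.
      (-1::int) ^ (crossings p A + t * card A) * (-1) ^ (crossings p C + t * card C))"
  proof (rule sum.cong[OF refl], clarsimp)
    fix A C assume "A \<subseteq> U" "C \<subseteq> V"
    moreover from this have "A \<inter> C = {}" using assms(1) by blast
    ultimately have "crossings p (A \<union> C) + t * card (A \<union> C)
        = (crossings p A + t * card A) + (crossings p C + t * card C)"
      using assms(2) by (simp add: crossings_Un card_Un_disjoint subset_iff algebra_simps)
    then show "(-1::int) ^ (crossings p (A \<union> C) + t * card (A \<union> C))
        = (-1) ^ (crossings p A + t * card A) * (-1) ^ (crossings p C + t * card C)"
      by (simp add: power_add)
  qed
  also have "\<dots> = crossing_sum p U t * crossing_sum p V t"
    unfolding crossing_sum_def by (simp add: sum_product sum.cartesian_product)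
  finally show ?thesis .
qed

fun clique_sum :: "nat \<Rightarrow> nat \<Rightarrow> int" where
  "clique_sum 0 t = 1"
| "clique_sum (Suc s) t = clique_sum s t + (-1) ^ t * clique_sum s (Suc t)"

lemma crossing_sum_clique:
  fixes p :: "('a::finite) pair"
  assumes "\<forall>a\<in>U. \<forall>b\<in>U. a \<noteq> b \<longrightarrow> crosses p a b"
  shows "crossing_sum p U t = clique_sum (card U) t"
  using finite[of U] assms
proof (induction U arbitrary: t rule: finite_induct)
  case empty then show ?case by (simp add: crossing_sum_def)
next
  case (insert x U)
  then have "crossing_sum p (insert x U) t
      = crossing_sum p U t + (-1) ^ t * crossing_sum p U (Suc t)"
    by (intro crossing_sum_insert_crossing) auto
  with insert show ?case by simp
qed

lemma clique_sum_values:
  "clique_sum 1 0 = 2" "clique_sum 2 0 = 2" "clique_sum 4 0 = -4" "clique_sum 5 0 = -8"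
  by (simp_all add: numeral_eq_Suc)

section \<open>Sliding one letter past another\<close>

lemma even_card_xor:
  fixes A :: "('a::finite) set"
  shows "even (card {c \<in> A. P c \<noteq> Q c}) \<longleftrightarrow> even (card {c \<in> A. P c} + card {c \<in> A. Q c})"
proof -
  have "card {c \<in> A. P c \<noteq> Q c} + 2 * card {c \<in> A. P c \<and> Q c}
      = card {c \<in> A. P c} + card {c \<in> A. Q c}"
  proof -
    have "{c \<in> A. P c} = {c \<in> A. P c \<and> \<not> Q c} \<union> {c \<in> A. P c \<and> Q c}"
      "{c \<in> A. Q c} = {c \<in> A. Q c \<and> \<not> P c} \<union> {c \<in> A. P c \<and> Q c}"
      "{c \<in> A. P c \<noteq> Q c} = {c \<in> A. P c \<and> \<not> Q c} \<union> {c \<in> A. Q c \<and> \<not> P c}"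
      by auto
    then show ?thesis by (simp add: card_Un_disjoint disjoint_iff)
  qed
  then show ?thesis by presburger
qed

context
  fixes p p' :: "('a::finite) pair" and y z :: 'a
  assumes y_neq_z: "y \<noteq> z"
    and crosses_off_y: "\<And>a b. a \<noteq> y \<Longrightarrow> b \<noteq> y \<Longrightarrow> crosses p' a b = crosses p a b"
    and crosses_y: "\<And>c. c \<noteq> y \<Longrightarrow> c \<noteq> z \<Longrightarrow> crosses p' y c = (crosses p y c \<noteq> crosses p z c)"
    and crosses_z_y: "crosses p z y" "crosses p' z y"
begin

lemma crossings_slide_parity:
  assumes "y \<in> B" "z \<notin> B"
  shows "even (crossings p' (insert z B)) \<longleftrightarrow> odd (crossings p B)"
    and "even (crossings p' B) \<longleftrightarrow> odd (crossings p (insert z B))"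
proof -
  define B0 where "B0 = B - {y}"
  have B: "B = insert y B0" "y \<notin> B0" "z \<notin> B0" using assms unfolding B0_def by auto
  let ?Y = "card {c \<in> B0. crosses p y c}" and ?Z = "card {c \<in> B0. crosses p z c}"
    and ?D = "card {c \<in> B0. crosses p y c \<noteq> crosses p z c}"
  have off_y: "crossings p' B0 = crossings p B0"
    using B(2) by (intro crossings_cong) (metis crosses_off_y)
  have p_B: "crossings p B = crossings p B0 + ?Y"
    using B by (simp add: crossings_insert)
  have "crosses p' y c = (crosses p y c \<noteq> crosses p z c)" if "c \<in> B0" for c
    using that B by (intro crosses_y) auto
  then have "{c \<in> B0. crosses p' y c} = {c \<in> B0. crosses p y c \<noteq> crosses p z c}"
    by auto
  then have p'_B: "crossings p' B = crossings p B0 + ?D"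
    using B off_y by (simp add: crossings_insert)
  have "{c \<in> B. crosses p z c} = insert y {c \<in> B0. crosses p z c}"
    using B crosses_z_y(1) by auto
  then have p_zB: "crossings p (insert z B) = crossings p B + Suc ?Z"
    using B assms(2) by (simp add: crossings_insert)
  have "crosses p' z c = crosses p z c" if "c \<in> B0" for c
    using that B y_neq_z by (intro crosses_off_y) auto
  then have "{c \<in> B. crosses p' z c} = insert y {c \<in> B0. crosses p z c}"
    using B crosses_z_y(2) by auto
  then have p'_zB: "crossings p' (insert z B) = crossings p' B + Suc ?Z"
    using B assms(2) by (simp add: crossings_insert)
  have "even ?D \<longleftrightarrow> even (?Y + ?Z)" by (rule even_card_xor)
  then show "even (crossings p' (insert z B)) \<longleftrightarrow> odd (crossings p B)"
    and "even (crossings p' B) \<longleftrightarrow> odd (crossings p (insert z B))"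
    using p_B p'_B p_zB p'_zB by auto
qed

lemma crossing_sum_slide: "crossing_sum p' UNIV 1 = crossing_sum p UNIV 1"
proof -
  define toggle where
    "toggle A = (if y \<in> A then (if z \<in> A then A - {z} else insert z A) else A)" for A
  have "toggle (toggle A) = A" for A using y_neq_z unfolding toggle_def by auto
  then have bij: "bij_betw toggle (Pow UNIV) (Pow UNIV)"
    by (intro bij_betw_byWitness[where f' = toggle]) auto
  have parity: "even (crossings p' (toggle A) + card (toggle A)) \<longleftrightarrow> even (crossings p A + card A)"
    for A
  proof (cases "y \<in> A")
    case False
    then have "crossings p' A = crossings p A"
      by (intro crossings_cong) (metis crosses_off_y)
    with False show ?thesis unfolding toggle_def by simp
  next
    case y: True
    show ?thesis
    proof (cases "z \<in> A")
      case False
      with y show ?thesis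
        unfolding toggle_def using crossings_slide_parity(1)[of A] by simp
    next
      case True
      define B where "B = A - {z}"
      have B: "A = insert z B" "y \<in> B" "z \<notin> B" using y True y_neq_z unfolding B_def by auto
      then have "toggle A = B" unfolding toggle_def by auto
      with B show ?thesis using crossings_slide_parity(2)[of B] by auto
    qed
  qed
  have "crossing_sum p' UNIV 1
      = (\<Sum>A\<in>Pow UNIV. (-1::int) ^ (crossings p' (toggle A) + card (toggle A)))"
    unfolding crossing_sum_def by (subst sum.reindex_bij_betw[OF bij, symmetric]) simp
  also have "\<dots> = crossing_sum p UNIV 1"
    unfolding crossing_sum_def using parity by (intro sum.cong) (simp_all add: minus_one_power_iff)
  finally show ?thesis .
qed

end

section \<open>Invariance under Rauzy moves\<close>

abbreviation is_row :: "('a::finite \<Rightarrow> nat) \<Rightarrow> bool" where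
  "is_row h \<equiv> bij_betw h UNIV {1..CARD('a)}"

lemma is_row_bounds:
  fixes h :: "'a::finite \<Rightarrow> nat"
  assumes "is_row h"
  shows "1 \<le> h a" "h a \<le> CARD('a)"
  using bij_betw_apply[OF assms, of a] by auto

lemma is_row_inv_eq:
  fixes h :: "'a::finite \<Rightarrow> nat"
  assumes "is_row h" "1 \<le> k" "k \<le> CARD('a)"
  shows "h (inv h k) = k"
  using assms by (intro f_inv_into_f) (simp add: bij_betw_imp_surj_on)

lemma is_row_eq_iff_inv:
  fixes h :: "'a::finite \<Rightarrow> nat"
  assumes "is_row h" "1 \<le> k" "k \<le> CARD('a)"
  shows "h a = k \<longleftrightarrow> a = inv h k"
  using assms is_row_inv_eq[OF assms] bij_betw_imp_inj_on[OF assms(1)] by (auto simp: inv_f_f)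

lemma is_row_less_card:
  fixes h :: "'a::finite \<Rightarrow> nat"
  assumes "is_row h" "a \<noteq> inv h CARD('a)"
  shows "h a < CARD('a)"
  using is_row_bounds(2)[OF assms(1), of a] is_row_eq_iff_inv[OF assms(1), of "CARD('a)" a] assms(2)
  by simp

lemma is_row_greater_one:
  fixes h :: "'a::finite \<Rightarrow> nat"
  assumes "is_row h" "a \<noteq> inv h 1"
  shows "1 < h a"
  using is_row_bounds(1)[OF assms(1), of a] is_row_eq_iff_inv[OF assms(1), of 1 a] assms(2)
  by simp

lemma is_row_inv_card:
  fixes h :: "'a::finite \<Rightarrow> nat"
  assumes "is_row h"
  shows "h (inv h CARD('a)) = CARD('a)" "h (inv h 1) = 1"
  using is_row_inv_eq[OF assms] by simp_all

lemma is_rowI: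
  fixes h :: "'a::finite \<Rightarrow> nat"
  assumes "inj h" "\<And>b. 1 \<le> h b" "\<And>b. h b \<le> CARD('a)"
  shows "is_row h"
proof -
  have "range h \<subseteq> {1..CARD('a)}" using assms(2,3) by auto
  moreover have "card (range h) = card {1..CARD('a)}" using assms(1) by (simp add: card_image)
  ultimately have "range h = {1..CARD('a)}" by (intro card_subset_eq) auto
  with assms(1) show ?thesis by (simp add: bij_betw_def)
qed

lemma crosses_iff_order_differs:
  assumes "inj (fst p)" "inj (snd p)" "a \<noteq> b"
  shows "crosses p a b \<longleftrightarrow> (fst p a < fst p b) \<noteq> (snd p a < snd p b)"
proof -
  have "fst p a \<noteq> fst p b" "snd p a \<noteq> snd p b" using assms by (auto dest: injD)
  then show ?thesis unfolding crosses_def by auto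
qed

text \<open>Rauzy moves are only well behaved on pairs whose rows start, and end, with different
  letters; standard pairs have this property and it propagates along the extended class.\<close>

definition distinct_ends :: "('a::finite) pair \<Rightarrow> bool" where
  "distinct_ends p \<longleftrightarrow> is_pair p \<and> inv (fst p) 1 \<noteq> inv (snd p) 1
     \<and> inv (fst p) CARD('a) \<noteq> inv (snd p) CARD('a)"

context
  fixes f g :: "'a::finite \<Rightarrow> nat"
  assumes f: "is_row f" and g: "is_row g"
    and last_distinct: "inv f CARD('a) \<noteq> inv g CARD('a)"
begin

lemma rauzy_row_eq:
  "rauzy_row f g b = (if b = inv g CARD('a) then g (inv f CARD('a)) + 1
                      else if g b \<le> g (inv f CARD('a)) then g b else g b + 1)"
  using is_row_less_card[OF g] is_row_inv_card[OF g] last_distinct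
  unfolding rauzy_row_def Let_def by (auto dest: leD)

lemma rauzy_row_less_iff:
  assumes "a \<noteq> inv g CARD('a)" "b \<noteq> inv g CARD('a)"
  shows "rauzy_row f g a < rauzy_row f g b \<longleftrightarrow> g a < g b"
  using assms by (auto simp: rauzy_row_eq)

lemma is_row_rauzy_row: "is_row (rauzy_row f g)"
proof (rule is_rowI)
  let ?y = "inv g CARD('a)" and ?z = "inv f CARD('a)"
  have g_z: "g ?z < CARD('a)" using is_row_less_card[OF g] last_distinct by simp
  show "inj (rauzy_row f g)"
  proof (rule injI)
    fix a b assume eq: "rauzy_row f g a = rauzy_row f g b"
    have ne: "b \<noteq> ?y \<Longrightarrow> rauzy_row f g b \<noteq> rauzy_row f g ?y" for b
      by (simp add: rauzy_row_eq)
    have "a \<noteq> ?y \<and> b \<noteq> ?y \<or> a = b"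
      using eq ne[of a] ne[of b] by (cases "a = ?y"; cases "b = ?y") auto
    moreover have "g a = g b" if "a \<noteq> ?y" "b \<noteq> ?y"
      using eq rauzy_row_less_iff[OF that] rauzy_row_less_iff[OF that(2,1)] by linarith
    ultimately show "a = b" using bij_betw_imp_inj_on[OF g] by (auto dest: injD)
  qed
  show "1 \<le> rauzy_row f g b" "rauzy_row f g b \<le> CARD('a)" for b
    using is_row_bounds[OF g, of b] g_z is_row_less_card[OF g, of b] by (auto simp: rauzy_row_eq)
qed

lemma distinct_ends_rauzy_row:
  assumes "inv f 1 \<noteq> inv g 1"
  shows "distinct_ends (f, rauzy_row f g)"
proof -
  let ?y = "inv g CARD('a)" and ?z = "inv f CARD('a)" and ?w = "inv g 1"
  have g_z: "g ?z < CARD('a)" using is_row_less_card[OF g] last_distinct by simp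
  have "?w \<noteq> ?y"
    using is_row_inv_card[OF g] is_row_bounds(1)[OF g, of ?z] g_z by auto
  moreover have "g ?w = 1" using is_row_inv_card[OF g] by simp
  ultimately have "rauzy_row f g ?w = 1"
    using is_row_bounds(1)[OF g, of ?z] by (simp add: rauzy_row_eq)
  then have first: "inv (rauzy_row f g) 1 = ?w"
    by (intro inv_f_eq bij_betw_imp_inj_on[OF is_row_rauzy_row])
  have "rauzy_row f g ?z \<noteq> CARD('a)"
    using last_distinct g_z by (simp add: rauzy_row_eq)
  then have last: "?z \<noteq> inv (rauzy_row f g) CARD('a)"
    using is_row_inv_card(1)[OF is_row_rauzy_row] by auto
  show ?thesis
    unfolding distinct_ends_def is_pair_def using f is_row_rauzy_row first last assms by simp
qed

lemma crossing_sum_rauzy_row: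
  "crossing_sum (f, rauzy_row f g) UNIV 1 = crossing_sum (f, g) UNIV 1"
proof -
  let ?y = "inv g CARD('a)" and ?z = "inv f CARD('a)" and ?g' = "rauzy_row f g"
  have f_z: "f ?z = CARD('a)" and g_y: "g ?y = CARD('a)"
    using is_row_inv_card f g by blast+
  have f_less: "a \<noteq> ?z \<Longrightarrow> f a < CARD('a)" and g_less: "a \<noteq> ?y \<Longrightarrow> g a < CARD('a)" for a
    using is_row_less_card f g by blast+
  have inj: "inj f" "inj g" "inj ?g'"
    using f g is_row_rauzy_row by (auto dest: bij_betw_imp_inj_on)
  show ?thesis
  proof (rule crossing_sum_slide)
    show "?y \<noteq> ?z" using last_distinct by simp
    show "crosses (f, ?g') a b = crosses (f, g) a b" if "a \<noteq> ?y" "b \<noteq> ?y" for a b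
      using that rauzy_row_less_iff[of a b] rauzy_row_less_iff[of b a] by (simp add: crosses_def)
    show "crosses (f, ?g') ?y c = (crosses (f, g) ?y c \<noteq> crosses (f, g) ?z c)"
      if "c \<noteq> ?y" "c \<noteq> ?z" for c
    proof -
      have "g c \<noteq> g ?z" using that inj by (auto dest: injD)
      then have "?g' ?y < ?g' c \<longleftrightarrow> g ?z < g c" using that by (auto simp: rauzy_row_eq)
      then show ?thesis
        using that last_distinct inj f_less[of c] g_less[of c] f_z g_y
        by (simp add: crosses_iff_order_differs)
    qed
    show "crosses (f, g) ?z ?y" "crosses (f, ?g') ?z ?y"
      using last_distinct f_less g_less f_z g_y by (auto simp: crosses_def rauzy_row_eq)
  qed
qed

end

lemma crosses_swap: "crosses (prod.swap p) a b = crosses p a b"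
  unfolding crosses_def by auto

lemma distinct_ends_swap: "distinct_ends (prod.swap p) \<longleftrightarrow> distinct_ends p"
  unfolding distinct_ends_def is_pair_def by auto

lemma rauzy_True_eq_swap: "rauzy True p = prod.swap (rauzy False (prod.swap p))"
  unfolding rauzy_def by simp

lemma left_rauzy_True_eq_swap: "left_rauzy True p = prod.swap (left_rauzy False (prod.swap p))"
  unfolding left_rauzy_def by simp

text \<open>Reading both rows from right to left turns left Rauzy moves into right Rauzy moves.\<close>

definition reverse_row :: "('a::finite \<Rightarrow> nat) \<Rightarrow> 'a \<Rightarrow> nat" where
  "reverse_row h a = Suc CARD('a) - h a"

definition reverse_pair :: "('a::finite) pair \<Rightarrow> 'a pair" where
  "reverse_pair p = (reverse_row (fst p), reverse_row (snd p))"

context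
  fixes h :: "'a::finite \<Rightarrow> nat"
  assumes h: "is_row h"
begin

lemma reverse_row_less_iff: "reverse_row h a < reverse_row h b \<longleftrightarrow> h b < h a"
  using is_row_bounds[OF h, of a] is_row_bounds[OF h, of b] unfolding reverse_row_def by linarith

lemma reverse_row_reverse_row: "reverse_row (reverse_row h) = h"
  unfolding reverse_row_def
  by (intro ext) (simp add: diff_diff_cancel le_SucI is_row_bounds(2)[OF h])

lemma is_row_reverse_row: "is_row (reverse_row h)"
proof (rule is_rowI)
  show "inj (reverse_row h)"
  proof (rule injI)
    fix a b assume "reverse_row h a = reverse_row h b"
    then have "h a = h b"
      using is_row_bounds[OF h, of a] is_row_bounds[OF h, of b]
      unfolding reverse_row_def by linarith
    then show "a = b" using bij_betw_imp_inj_on[OF h] by (auto dest: injD)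
  qed
  show "1 \<le> reverse_row h b" "reverse_row h b \<le> CARD('a)" for b
    using is_row_bounds[OF h, of b] unfolding reverse_row_def by linarith+
qed

lemma inv_reverse_row:
  "inv (reverse_row h) 1 = inv h CARD('a)" "inv (reverse_row h) CARD('a) = inv h 1"
  using is_row_inv_card[OF h] bij_betw_imp_inj_on[OF is_row_reverse_row]
  by (auto intro!: inv_f_eq simp: reverse_row_def)

end

lemma crosses_reverse_pair:
  assumes "is_pair p"
  shows "crosses (reverse_pair p) a b = crosses p a b"
  using assms reverse_row_less_iff unfolding crosses_def reverse_pair_def is_pair_def by auto

lemma distinct_ends_reverse_pair:
  assumes "distinct_ends p"
  shows "distinct_ends (reverse_pair p)"
  using assms is_row_reverse_row inv_reverse_row
  unfolding distinct_ends_def is_pair_def reverse_pair_def by auto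

lemma left_rauzy_row_eq_reverse:
  assumes f: "is_row f" and g: "is_row g" and first_distinct: "inv f 1 \<noteq> inv g 1"
  shows "left_rauzy_row f g = reverse_row (rauzy_row (reverse_row f) (reverse_row g))"
proof
  fix b
  let ?a = "inv f 1"
  have "1 < g ?a"
    using is_row_eq_iff_inv[OF g, of 1 ?a] is_row_bounds(1)[OF g, of ?a] first_distinct by simp
  then show "left_rauzy_row f g b = reverse_row (rauzy_row (reverse_row f) (reverse_row g)) b"
    using is_row_bounds[OF g, of b] is_row_bounds[OF g, of ?a]
    unfolding left_rauzy_row_def rauzy_row_def Let_def inv_reverse_row[OF f]
    by (auto simp: reverse_row_def)
qed

lemma left_rauzy_False_eq_reverse:
  assumes "distinct_ends p"
  shows "left_rauzy False p = reverse_pair (rauzy False (reverse_pair p))"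
  using assms reverse_row_reverse_row left_rauzy_row_eq_reverse
  unfolding distinct_ends_def is_pair_def left_rauzy_def rauzy_def reverse_pair_def by auto

lemma rauzy_False_keeps_crossing_sum:
  assumes "distinct_ends p"
  shows "distinct_ends (rauzy False p)
    \<and> crossing_sum (rauzy False p) UNIV 1 = crossing_sum p UNIV 1"
proof -
  obtain f g where p: "p = (f, g)" by (cases p)
  with assms have rows: "is_row f" "is_row g" "inv f CARD('a) \<noteq> inv g CARD('a)"
    and "inv f 1 \<noteq> inv g 1"
    unfolding distinct_ends_def is_pair_def by auto
  then show ?thesis
    unfolding p rauzy_def
    using distinct_ends_rauzy_row[OF rows] crossing_sum_rauzy_row[OF rows] by simp
qed

lemma left_rauzy_False_keeps_crossing_sum:
  assumes "distinct_ends p"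
  shows "distinct_ends (left_rauzy False p)
    \<and> crossing_sum (left_rauzy False p) UNIV 1 = crossing_sum p UNIV 1"
proof -
  let ?q = "rauzy False (reverse_pair p)"
  have q: "distinct_ends ?q" "crossing_sum ?q UNIV 1 = crossing_sum (reverse_pair p) UNIV 1"
    using rauzy_False_keeps_crossing_sum[OF distinct_ends_reverse_pair[OF assms]] by auto
  have "is_pair p" "is_pair ?q" using assms q(1) unfolding distinct_ends_def by simp_all
  then show ?thesis
    unfolding left_rauzy_False_eq_reverse[OF assms]
    using distinct_ends_reverse_pair[OF q(1)] q(2)
    by (simp add: crossing_sum_cong[OF crosses_reverse_pair])
qed

lemma rauzy_step_keeps_crossing_sum:
  assumes "distinct_ends p" "rauzy_step p q"
  shows "distinct_ends q \<and> crossing_sum q UNIV 1 = crossing_sum p UNIV 1"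
proof -
  have swap: "distinct_ends (prod.swap r)
      \<and> crossing_sum (prod.swap r) UNIV 1 = crossing_sum p UNIV 1"
    if "distinct_ends r \<and> crossing_sum r UNIV 1 = crossing_sum (prod.swap p) UNIV 1" for r
    using that by (simp add: distinct_ends_swap crossing_sum_cong[OF crosses_swap])
  have sp: "distinct_ends (prod.swap p)" using assms(1) by (simp add: distinct_ends_swap)
  have "distinct_ends (rauzy e p) \<and> crossing_sum (rauzy e p) UNIV 1 = crossing_sum p UNIV 1"
    and "distinct_ends (left_rauzy e p)
      \<and> crossing_sum (left_rauzy e p) UNIV 1 = crossing_sum p UNIV 1"
    for e
    using rauzy_False_keeps_crossing_sum[OF assms(1)]
      left_rauzy_False_keeps_crossing_sum[OF assms(1)]
      swap[OF rauzy_False_keeps_crossing_sum[OF sp]]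
      swap[OF left_rauzy_False_keeps_crossing_sum[OF sp]]
    by (cases e; simp only: rauzy_True_eq_swap left_rauzy_True_eq_swap)+
  then show ?thesis using assms(2) unfolding rauzy_step_def by blast
qed

lemma rauzy_class_keeps_crossing_sum:
  assumes "rauzy_step\<^sup>*\<^sup>* p q" "distinct_ends p"
  shows "distinct_ends q \<and> crossing_sum q UNIV 1 = crossing_sum p UNIV 1"
  using assms by (induction rule: rtranclp_induct) (auto dest: rauzy_step_keeps_crossing_sum)

lemma crossing_sum_relabel:
  fixes p q :: "('a::finite) pair"
  assumes h: "bij h" and "fst q \<circ> h = fst p" "snd q \<circ> h = snd p"
  shows "crossing_sum p UNIV t = crossing_sum q UNIV t"
proof -
  have inj: "inj h" using h bij_is_inj by auto
  have "crossings q (h ` A) = crossings p A" for A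
  proof -
    have "{(a, b). a \<in> h ` A \<and> b \<in> h ` A \<and> fst q a < fst q b \<and> snd q b < snd q a}
        = map_prod h h ` {(a, b). a \<in> A \<and> b \<in> A \<and> fst p a < fst p b \<and> snd p b < snd p a}"
      using assms(2,3) by (auto simp: fun_eq_iff)
    moreover have "inj (map_prod h h)" using inj by (rule prod.inj_map[OF _ inj])
    ultimately show ?thesis
      unfolding crossings_def by (simp add: card_image inj_on_subset[of _ UNIV])
  qed
  moreover have "bij_betw (image h) (Pow UNIV) (Pow UNIV)"
    using h bij_betw_Pow[of h UNIV UNIV] unfolding bij_def by blast
  ultimately show ?thesis
    unfolding crossing_sum_def
    by (subst sum.reindex_bij_betw[symmetric]) (auto simp: card_image inj_on_subset[OF inj])
qed

lemma crossing_sum_eq_if_pair_perm_eq: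
  fixes p q :: "('a::finite) pair"
  assumes p: "is_pair p" and q: "is_pair q" and "pair_perm p = pair_perm q"
  shows "crossing_sum p UNIV t = crossing_sum q UNIV t"
proof (rule crossing_sum_relabel)
  let ?h = "inv (fst q) \<circ> fst p"
  have rows: "is_row (fst p)" "is_row (fst q)" using p q unfolding is_pair_def by auto
  then have range: "range (fst p) = range (fst q)" by (simp add: bij_betw_imp_surj_on)
  have fst_eq: "fst q (?h a) = fst p a" for a
  proof -
    have "fst p a \<in> range (fst q)" using range by auto
    then show ?thesis by (simp add: f_inv_into_f)
  qed
  then show "fst q \<circ> ?h = fst p" by auto
  show "snd q \<circ> ?h = snd p"
  proof
    fix a
    have "1 \<le> fst p a" "fst p a \<le> CARD('a)" using is_row_bounds[OF rows(1)] by auto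
    then have "snd q (?h a) = pair_perm q (fst p a)" "pair_perm p (fst p a) = snd p a"
      unfolding pair_perm_def using bij_betw_imp_inj_on[OF rows(1)] by auto
    then show "(snd q \<circ> ?h) a = snd p a" using assms(3) by simp
  qed
  have "inj ?h"
  proof (rule injI)
    fix a b assume "?h a = ?h b"
    then have "fst p a = fst p b" using fst_eq by metis
    then show "a = b" using bij_betw_imp_inj_on[OF rows(1)] by (auto dest: injD)
  qed
  then show "bij ?h" using finite_UNIV_inj_surj[of ?h] by (simp add: bij_def)
qed

section \<open>Standard piecewise order reversing pairs\<close>

lemma distinct_ends_if_standard:
  fixes p :: "('a::finite) pair"
  assumes "is_pair p" "standard p" "2 \<le> CARD('a)"
  shows "distinct_ends p"
proof -
  have "is_row (snd p)" using assms(1) unfolding is_pair_def by simp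
  then have "snd p (inv (snd p) 1) \<noteq> snd p (inv (snd p) CARD('a))"
    using is_row_inv_card[of "snd p"] assms(3) by auto
  then show ?thesis using assms(1,2) unfolding distinct_ends_def standard_def by auto
qed

text \<open>The first letter of a standard pair is the last letter of the bottom row, so it crosses
  every other letter, and so does the last letter.\<close>

lemma standard_end_letters_cross:
  fixes p :: "('a::finite) pair"
  assumes "is_pair p" "standard p"
  shows "c \<noteq> inv (fst p) 1 \<Longrightarrow> crosses p (inv (fst p) 1) c"
    and "c \<noteq> inv (fst p) CARD('a) \<Longrightarrow> crosses p (inv (fst p) CARD('a)) c"
proof -
  have f: "is_row (fst p)" and g: "is_row (snd p)" using assms(1) unfolding is_pair_def by auto
  have std: "inv (fst p) 1 = inv (snd p) CARD('a)" "inv (fst p) CARD('a) = inv (snd p) 1"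
    using assms(2) unfolding standard_def by auto
  show "c \<noteq> inv (fst p) 1 \<Longrightarrow> crosses p (inv (fst p) 1) c"
    and "c \<noteq> inv (fst p) CARD('a) \<Longrightarrow> crosses p (inv (fst p) CARD('a)) c"
    using std is_row_greater_one[OF f] is_row_less_card[OF g] is_row_less_card[OF f]
      is_row_greater_one[OF g] is_row_inv_card[OF f] is_row_inv_card[OF g]
    unfolding crosses_def by force+
qed

lemma crossing_sum_standard:
  fixes p :: "('a::finite) pair"
  assumes "is_pair p" "standard p" "2 \<le> CARD('a)"
  shows "crossing_sum p UNIV 1 = - 2 * crossing_sum p (fst p -` {2..<CARD('a)}) 0"
proof -
  let ?f = "fst p"
  let ?a = "inv ?f 1" and ?z = "inv ?f CARD('a)" and ?W = "?f -` {2..<CARD('a)}"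
  have f: "is_row ?f" using assms(1) unfolding is_pair_def by auto
  have "?f ?a = 1" "?f ?z = CARD('a)" using is_row_inv_card[OF f] by auto
  then have a_notin: "?a \<notin> insert ?z ?W" and z_notin: "?z \<notin> ?W" using assms(3) by auto
  have a_all: "\<forall>c\<in>insert ?z ?W. crosses p ?a c"
    using a_notin by (intro ballI standard_end_letters_cross[OF assms(1,2)]) auto
  have z_all: "\<forall>c\<in>?W. crosses p ?z c"
    using z_notin by (intro ballI standard_end_letters_cross[OF assms(1,2)]) auto
  have "c = ?a \<or> c = ?z \<or> c \<in> ?W" for c
    using is_row_bounds[OF f, of c] is_row_eq_iff_inv[OF f, of 1 c]
      is_row_eq_iff_inv[OF f, of "CARD('a)" c] by force
  then have "insert ?a (insert ?z ?W) = UNIV" by blast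
  then have "crossing_sum p UNIV 1 = crossing_sum p (insert ?a (insert ?z ?W)) 1" by (simp only:)
  also have "\<dots> = crossing_sum p (insert ?z ?W) 1 - crossing_sum p (insert ?z ?W) 2"
    using crossing_sum_insert_crossing[OF a_notin a_all, of 1] by (simp add: numeral_2_eq_2)
  also have "\<dots> = (crossing_sum p ?W 1 - crossing_sum p ?W 2)
      - (crossing_sum p ?W 2 + crossing_sum p ?W 3)"
    using crossing_sum_insert_crossing[OF z_notin z_all, of 1]
      crossing_sum_insert_crossing[OF z_notin z_all, of 2]
    by (simp add: numeral_2_eq_2 numeral_3_eq_3)
  also have "\<dots> = - 2 * crossing_sum p ?W 0"
    using crossing_sum_Suc_Suc[of p ?W 0] crossing_sum_Suc_Suc[of p ?W 1]
    by (simp add: numeral_2_eq_2 numeral_3_eq_3)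
  finally show ?thesis .
qed

lemma crossing_sum_reversed_block:
  fixes p :: "('a::finite) pair"
  assumes "is_pair p"
    and reversed: "\<forall>b\<in>fst p -` {lo..<hi}. fst p b + snd p b = s"
    and "1 \<le> lo" "hi \<le> Suc CARD('a)"
  shows "crossing_sum p (fst p -` {lo..<hi}) t = clique_sum (hi - lo) t"
proof -
  have f: "is_row (fst p)" using assms(1) unfolding is_pair_def by simp
  have "crosses p a b" if "a \<in> fst p -` {lo..<hi}" "b \<in> fst p -` {lo..<hi}" "a \<noteq> b" for a b
  proof -
    have "fst p a \<noteq> fst p b" using that(3) bij_betw_imp_inj_on[OF f] by (auto dest: injD)
    moreover have "fst p a + snd p a = fst p b + snd p b" using that(1,2) reversed by simp
    ultimately show ?thesis unfolding crosses_def by linarith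
  qed
  moreover have "card (fst p -` {lo..<hi}) = hi - lo"
    using assms(3,4) bij_betw_imp_inj_on[OF f] bij_betw_imp_surj_on[OF f]
    by (subst card_vimage_inj) auto
  ultimately show ?thesis by (simp add: crossing_sum_clique)
qed

lemma por_with_bounds:
  fixes p :: "('a::finite) pair"
  assumes "por_with p l k" "j \<le> l"
  shows "2 \<le> k j" "k j \<le> CARD('a)"
proof -
  have k: "k 0 = 2" "k l = CARD('a)" "\<forall>i<l. k i < k (Suc i)"
    using assms(1) unfolding por_with_def by auto
  show "2 \<le> k j"
    using assms(2)
  proof (induction j)
    case (Suc j)
    moreover have "k j < k (Suc j)" using k(3) Suc.prems by simp
    ultimately show ?case by simp
  qed (use k in simp)
  show "k j \<le> CARD('a)"
    using assms(2) by (induction j rule: inc_induct) (use k in auto)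
qed

lemma por_with_block:
  fixes p :: "('a::finite) pair"
  assumes "por_with p l k" "i < l"
  shows "fst p -` {k i..<k (Suc i)} = snd p -` {k i..<k (Suc i)}"
    and "\<forall>b\<in>fst p -` {k i..<k (Suc i)}. fst p b + snd p b = k i + k (Suc i) - 1"
proof -
  have "\<forall>i\<in>{1..l}. fst p -` {k (i - 1)..<k i} = snd p -` {k (i - 1)..<k i} \<and>
      (\<forall>b\<in>fst p -` {k (i - 1)..<k i}. fst p b + snd p b = k (i - 1) + k i - 1)"
    using assms(1) unfolding por_with_def by blast
  from bspec[OF this, of "Suc i"] assms(2)
  show "fst p -` {k i..<k (Suc i)} = snd p -` {k i..<k (Suc i)}"
    and "\<forall>b\<in>fst p -` {k i..<k (Suc i)}. fst p b + snd p b = k i + k (Suc i) - 1"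
    by simp_all
qed

lemma crossing_sum_por_with_prefix:
  fixes p :: "('a::finite) pair"
  assumes "is_pair p" and por: "por_with p l k" and "j \<le> l"
  shows "fst p -` {2..<k j} = snd p -` {2..<k j}
    \<and> crossing_sum p (fst p -` {2..<k j}) 0 = (\<Prod>i<j. clique_sum (k (Suc i) - k i) 0)"
  using assms(3)
proof (induction j)
  case 0
  then show ?case using por unfolding por_with_def by (simp add: crossing_sum_def)
next
  case (Suc j)
  let ?f = "fst p" and ?g = "snd p"
  have IH: "?f -` {2..<k j} = ?g -` {2..<k j}"
    "crossing_sum p (?f -` {2..<k j}) 0 = (\<Prod>i<j. clique_sum (k (Suc i) - k i) 0)"
    using Suc by auto
  have j: "j < l" using Suc.prems by simp
  have bounds: "2 \<le> k j" "k j < k (Suc j)" "k (Suc j) \<le> CARD('a)"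
    using por_with_bounds[OF por] j por unfolding por_with_def by auto
  then have split: "{2..<k (Suc j)} = {2..<k j} \<union> {k j..<k (Suc j)}" by auto
  have "\<not> crosses p a c" if "a \<in> ?f -` {2..<k j}" "c \<in> ?f -` {k j..<k (Suc j)}" for a c
  proof -
    have "a \<in> ?g -` {2..<k j}" "c \<in> ?g -` {k j..<k (Suc j)}"
      using that IH(1) por_with_block(1)[OF por j] by blast+
    with that show ?thesis unfolding crosses_def by auto
  qed
  then have "crossing_sum p (?f -` {2..<k (Suc j)}) 0
      = crossing_sum p (?f -` {2..<k j}) 0 * crossing_sum p (?f -` {k j..<k (Suc j)}) 0"
    unfolding split vimage_Un by (intro crossing_sum_Un) auto
  also have "\<dots> = (\<Prod>i<Suc j. clique_sum (k (Suc i) - k i) 0)"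
    using IH(2) crossing_sum_reversed_block[OF assms(1) por_with_block(2)[OF por j]] bounds
    by simp
  finally show ?case
    using IH(1) por_with_block(1)[OF por j] unfolding split vimage_Un by simp
qed

lemma crossing_sum_por_with:
  fixes p :: "('a::finite) pair"
  assumes "is_pair p" "2 \<le> CARD('a)" and por: "por_with p l k"
  shows "crossing_sum p UNIV 1 = - 2 * prod_list (map (\<lambda>s. clique_sum s 0) (block_sizes l k))"
proof -
  have "standard p" "k l = CARD('a)" using por unfolding por_with_def by simp_all
  then have "crossing_sum p UNIV 1 = - 2 * crossing_sum p (fst p -` {2..<k l}) 0"
    using crossing_sum_standard[OF assms(1) _ assms(2)] by simp
  also have "\<dots> = - 2 * (\<Prod>i<l. clique_sum (k (Suc i) - k i) 0)"
    using conjunct2[OF crossing_sum_por_with_prefix[OF assms(1) por le_refl]] by (simp only:)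
  also have "(\<Prod>i<l. clique_sum (k (Suc i) - k i) 0)
      = prod_list (map (\<lambda>s. clique_sum s 0) (block_sizes l k))"
    unfolding block_sizes_def by (induction l) simp_all
  finally show ?thesis .
qed

section \<open>Signs of the block products\<close>

lemma chains_not_Nil: "chains xs \<noteq> []"
  by (induction xs) auto

lemma concat_chains: "concat (chains ss) = filter (\<lambda>x. x \<noteq> 1) ss"
proof (induction ss)
  case (Cons x xs)
  have "chains xs = hd (chains xs) # tl (chains xs)" using chains_not_Nil[of xs] by simp
  then have "concat (chains xs) = hd (chains xs) @ concat (tl (chains xs))"
    by (metis concat.simps(2))
  with Cons show ?case by simp
qed simp

lemma prod_list_map_concat:
  "prod_list (map F (concat xss)) = prod_list (map (\<lambda>xs. prod_list (map F xs)) xss)"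
  by (induction xss) auto

lemma prod_list_pos:
  fixes xs :: "'a::linordered_idom list"
  shows "\<forall>x\<in>set xs. 0 < x \<Longrightarrow> 0 < prod_list xs"
  by (induction xs) auto

lemma prod_list_neg_if_unique_neg:
  fixes xs :: "'a::linordered_idom list"
  assumes "j < length xs" "xs ! j < 0" "\<forall>i<length xs. i \<noteq> j \<longrightarrow> 0 < xs ! i"
  shows "prod_list xs < 0"
proof -
  have "xs = take j xs @ xs ! j # drop (Suc j) xs" by (rule id_take_nth_drop[OF assms(1)])
  then have "prod_list xs = prod_list (take j xs) * xs ! j * prod_list (drop (Suc j) xs)"
    by (metis mult.assoc prod_list.Cons prod_list.append)
  moreover have "0 < prod_list (take j xs)" "0 < prod_list (drop (Suc j) xs)"
    using assms(1,3) by (auto intro!: prod_list_pos simp: in_set_conv_nth nth_take nth_drop)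
  ultimately show ?thesis using assms(2) by (simp add: mult_pos_neg mult_neg_pos)
qed

lemma sgn_prod_list_filter_1:
  fixes F :: "nat \<Rightarrow> int"
  assumes "0 < F 1"
  shows "sgn (prod_list (map F ss)) = sgn (prod_list (map F (filter (\<lambda>x. x \<noteq> 1) ss)))"
  using assms by (induction ss) (auto simp: sgn_mult)

lemma block_product_pos:
  "set ss \<subseteq> {1, 2} \<Longrightarrow> 0 < prod_list (map (\<lambda>s. clique_sum s 0) ss)"
  by (induction ss) (auto simp: clique_sum_values)

lemma block_product_pos_if_type2:
  assumes "type2_sizes ss"
  shows "0 < prod_list (map (\<lambda>s. clique_sum s 0) ss)"
proof (rule block_product_pos, rule subsetI)
  fix x assume x: "x \<in> set ss"
  show "x \<in> {1, 2}"
  proof (cases "x = 1")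
    case False
    with x have "x \<in> set (concat (chains ss))" by (simp add: concat_chains)
    with assms show ?thesis unfolding type2_sizes_def by auto
  qed simp
qed

lemma block_product_neg_if_negative_chain:
  assumes "j < length (chains ss)" "prod_list (map (\<lambda>s. clique_sum s 0) (chains ss ! j)) < 0"
    and others: "\<forall>i<length (chains ss). i \<noteq> j \<longrightarrow> (\<forall>x\<in>set (chains ss ! i). x = 2)"
  shows "prod_list (map (\<lambda>s. clique_sum s 0) ss) < 0"
proof -
  let ?F = "\<lambda>s. clique_sum s 0"
  have "prod_list (map (\<lambda>c. prod_list (map ?F c)) (chains ss)) < 0"
  proof (rule prod_list_neg_if_unique_neg)
    show "\<forall>i<length (map (\<lambda>c. prod_list (map ?F c)) (chains ss)). i \<noteq> j \<longrightarrow>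
        0 < map (\<lambda>c. prod_list (map ?F c)) (chains ss) ! i"
      using others by (auto intro!: block_product_pos)
  qed (use assms in simp_all)
  then have "prod_list (map ?F (filter (\<lambda>x. x \<noteq> 1) ss)) < 0"
    unfolding concat_chains[symmetric] prod_list_map_concat .
  then show ?thesis
    using sgn_prod_list_filter_1[of ?F ss] by (simp add: clique_sum_values sgn_if split: if_splits)
qed

lemma block_product_neg_if_type4:
  assumes "type4_sizes ss"
  shows "prod_list (map (\<lambda>s. clique_sum s 0) ss) < 0"
proof -
  obtain j m where j: "j < length (chains ss)" "chains ss ! j = 4 # replicate m 2"
    and others: "\<forall>i<length (chains ss). i \<noteq> j \<longrightarrow> (\<forall>x\<in>set (chains ss ! i). x = 2)"
    using assms unfolding type4_sizes_def Let_def by fastforce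
  have "0 < prod_list (map (\<lambda>s. clique_sum s 0) (replicate m 2))"
    by (rule block_product_pos) auto
  then have "prod_list (map (\<lambda>s. clique_sum s 0) (chains ss ! j)) < 0"
    using j(2) by (simp add: clique_sum_values mult_neg_pos)
  then show ?thesis by (rule block_product_neg_if_negative_chain[OF j(1) _ others])
qed

lemma block_product_neg_if_type5:
  assumes "type5_sizes ss"
  shows "prod_list (map (\<lambda>s. clique_sum s 0) ss) < 0"
proof -
  obtain j where j: "j < length (chains ss)" "chains ss ! j = [5]"
    and others: "\<forall>i<length (chains ss). i \<noteq> j \<longrightarrow> (\<forall>x\<in>set (chains ss ! i). x = 2)"
    using assms unfolding type5_sizes_def Let_def by fastforce
  then show ?thesis
    by (intro block_product_neg_if_negative_chain[OF j(1)]) (simp_all add: clique_sum_values)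
qed

lemma crossing_sum_neg_if_type2:
  fixes p :: "('a::finite) pair"
  assumes "is_pair p" "2 \<le> CARD('a)" "type2 p"
  shows "crossing_sum p UNIV 1 < 0"
  using assms crossing_sum_por_with block_product_pos_if_type2 unfolding type2_def
  by fastforce

lemma crossing_sum_pos_if_type4_or_type5:
  fixes p :: "('a::finite) pair"
  assumes "is_pair p" "2 \<le> CARD('a)" "type4 p \<or> type5 p"
  shows "0 < crossing_sum p UNIV 1"
  using assms crossing_sum_por_with block_product_neg_if_type4 block_product_neg_if_type5
  unfolding type4_def type5_def by fastforce

theorem corollary4p10:
  fixes p q :: "('a::finite) pair"
  assumes "CARD('a) \<ge> 2"
    and "is_pair p" and "is_pair q"
    and "standard p" and "standard q"
    and "type2 p"
    and "type4 q \<or> type5 q"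
  shows "nonlabeled_ext_rauzy_class p \<noteq> nonlabeled_ext_rauzy_class q"
proof
  assume "nonlabeled_ext_rauzy_class p = nonlabeled_ext_rauzy_class q"
  then have "pair_perm p \<in> pair_perm ` labeled_ext_rauzy_class q"
    unfolding nonlabeled_ext_rauzy_class_def labeled_ext_rauzy_class_def by blast
  then obtain q' where reach: "rauzy_step\<^sup>*\<^sup>* q q'"
    and perm: "pair_perm q' = pair_perm p"
    unfolding labeled_ext_rauzy_class_def by auto
  have "distinct_ends q" using distinct_ends_if_standard assms(1,3,5) by blast
  then have "distinct_ends q'" "crossing_sum q' UNIV 1 = crossing_sum q UNIV 1"
    using rauzy_class_keeps_crossing_sum[OF reach] by auto
  then have "crossing_sum p UNIV 1 = crossing_sum q UNIV 1"
    using crossing_sum_eq_if_pair_perm_eq[OF assms(2) _ perm[symmetric]]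
    unfolding distinct_ends_def by auto
  moreover have "crossing_sum p UNIV 1 < 0" using crossing_sum_neg_if_type2 assms by blast
  moreover have "0 < crossing_sum q UNIV 1" using crossing_sum_pos_if_type4_or_type5 assms by blast
  ultimately show False by simp
qed

end
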